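(* Let $\mathbf z=(z_1,\dots,z_n)\in\bar\Sigma^n$, $\mathbf y=(y_1,\dots,y_n)\in\Sigma^n$ and $\mathbf r=(r_1,\dots,r_n)\in\{0,1\}^n$, and let $\mathbf z'$ be the result of the Rewrite-MDM transition, $z'_i=y_i$ if $r_i=1$ and $z'_i=z_i$ if $r_i=0$. Then there is a sequence of three AP-MDM steps $\mathbf z\to\mathbf u^{(1)}\to\mathbf u^{(2)}\to\mathbf u^{(3)}$ with $\mathbf u^{(3)}=\mathbf z'$; i.e., there exist token vectors $\mathbf y^{(j)}$ and control vectors $\mathbf c^{(j)}$ ($j=1,2,3$) of the appropriate lengths such that $\mathbf u^{(1)}=g(\mathbf z,\mathbf y^{(1)},\mathbf c^{(1)})$, $\mathbf u^{(2)}=g(\mathbf u^{(1)},\mathbf y^{(2)},\mathbf c^{(2)})$, $\mathbf u^{(3)}=g(\mathbf u^{(2)},\mathbf y^{(3)},\mathbf c^{(3)})=\mathbf z'$.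
   Context: Vocabulary $\Sigma$ with mask token $\mathsf M$, $\bar\Sigma=\Sigma\cup\{\mathsf M\}$. One AP-MDM step: given the current sequence $\mathbf x\in\bar\Sigma^m$, a mask-free token vector $\mathbf y\in\Sigma^m$ and control vector $\mathbf c\in(\{0,1\}^3)^m$, the next sequence is $g(\mathbf x,\mathbf y,\mathbf c)=(s_1,\dots,s_m)$ (concatenation of strings), where $s_i=\mathrm{insert}\circ\mathrm{delete}\circ\mathrm{remask}(y_i)$ with $\mathrm{remask}(y)=\mathsf M$ if $c_i[1]=1$, $=y$ if $x_i=\mathsf M$ and $c_i[1]=0$, $=x_i$ otherwise; $\mathrm{delete}(y)=\varepsilon$ (empty string) if $x_i=\mathsf M$ and $c_i[3]=1$, else $y$; $\mathrm{insert}(y)=(y,\mathsf M)$ if $c_i[2]=1$, else $y$. A Rewrite-MDM step, with binary rewrite signals $r_i$, replaces $z_i$ by $y_i$ when $r_i=1$ and keeps $z_i$ when $r_i=0$. *)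

theory Defs
  imports Main
begin

datatype 'a tok = Tok 'a | Mask

text \<open>Control triple (c[1], c[2], c[3]) = (remask, insert, delete).\<close>
type_synonym ctrl = "bool \<times> bool \<times> bool"

definition remask :: "'a tok \<Rightarrow> 'a \<Rightarrow> ctrl \<Rightarrow> 'a tok" where
  "remask x y c = (if fst c then Mask else if x = Mask then Tok y else x)"

definition delete :: "'a tok \<Rightarrow> ctrl \<Rightarrow> 'a tok \<Rightarrow> 'a tok list" where
  "delete x c t = (if x = Mask \<and> snd (snd c) then [] else [t])"

definition insert_mask :: "ctrl \<Rightarrow> 'a tok list \<Rightarrow> 'a tok list" where
  "insert_mask c s = (if fst (snd c) then s @ [Mask] else s)"

definition ap_local :: "'a tok \<Rightarrow> 'a \<Rightarrow> ctrl \<Rightarrow> 'a tok list" where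
  "ap_local x y c = insert_mask c (delete x c (remask x y c))"

text \<open>One AP-MDM step g(x, y, c) (intended for length x = length y = length c).\<close>
definition apmdm_step :: "'a tok list \<Rightarrow> 'a list \<Rightarrow> ctrl list \<Rightarrow> 'a tok list" where
  "apmdm_step x y c = concat (map (\<lambda>(xi, yi, ci). ap_local xi yi ci) (zip x (zip y c)))"

definition rewrite_step :: "'a tok list \<Rightarrow> 'a list \<Rightarrow> bool list \<Rightarrow> 'a tok list" where
  "rewrite_step z y r = map (\<lambda>(zi, yi, ri). if ri then Tok yi else zi) (zip z (zip y r))"

end

theory Submission
  imports Defs
begin

text \<open>An AP-MDM step can only change an unmasked token by masking it, and can only fill a mask,
  so a rewrite takes two steps that use remasking alone: first mask every position with \<open>r\<^sub>i\<close>,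
  then fill exactly those masks with \<open>y\<^sub>i\<close> while re-masking the masks already present in \<open>z\<close>.
  The third step leaves its input unchanged by re-masking every mask.\<close>

definition remask_only :: "bool list \<Rightarrow> ctrl list" where
  "remask_only bs = map (\<lambda>b. (b, False, False)) bs"

lemma ap_local_remask_only:
  "ap_local x y (b, False, False) = [if b then Mask else if x = Mask then Tok y else x]"
  by (simp add: ap_local_def insert_mask_def delete_def remask_def)

lemma apmdm_step_remask_only:
  "apmdm_step x y (remask_only bs) =
     map (\<lambda>(xi, yi, b). if b then Mask else if xi = Mask then Tok yi else xi) (zip x (zip y bs))"
  by (simp add: apmdm_step_def remask_only_def zip_map2 comp_def case_prod_unfold ap_local_remask_only)

lemma apmdm_step_remask_masks:
  assumes "length y = length x"
  shows "apmdm_step x y (remask_only (map (\<lambda>xi. xi = Mask) x)) = x"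
  using assms by (auto simp: apmdm_step_remask_only intro!: nth_equalityI)

lemma apmdm_step_mask_rewritten:
  assumes "length y = length z" and "length r = length z"
  shows "apmdm_step z y (remask_only (map2 (\<lambda>zi ri. ri \<or> zi = Mask) z r)) =
           map2 (\<lambda>zi ri. if ri then Mask else zi) z r"
  using assms by (auto simp: apmdm_step_remask_only intro!: nth_equalityI)

lemma apmdm_step_fill_rewritten:
  assumes "length y = length z" and "length r = length z"
  shows "apmdm_step (map2 (\<lambda>zi ri. if ri then Mask else zi) z r) y
           (remask_only (map2 (\<lambda>zi ri. \<not> ri \<and> zi = Mask) z r)) = rewrite_step z y r"
  using assms by (auto simp: apmdm_step_remask_only rewrite_step_def intro!: nth_equalityI)

theorem mainTheorem5:
  fixes z :: "'a tok list" and y :: "'a list" and r :: "bool list"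
  assumes "length y = length z" and "length r = length z"
  shows "\<exists>y1 c1 u1 y2 c2 u2 y3 c3.
           length y1 = length z \<and> length c1 = length z \<and> u1 = apmdm_step z y1 c1 \<and>
           length y2 = length u1 \<and> length c2 = length u1 \<and> u2 = apmdm_step u1 y2 c2 \<and>
           length y3 = length u2 \<and> length c3 = length u2 \<and>
           apmdm_step u2 y3 c3 = rewrite_step z y r"
proof -
  let ?c1 = "remask_only (map2 (\<lambda>zi ri. ri \<or> zi = Mask) z r)"
  let ?u1 = "map2 (\<lambda>zi ri. if ri then Mask else zi) z r"
  let ?c2 = "remask_only (map2 (\<lambda>zi ri. \<not> ri \<and> zi = Mask) z r)"
  let ?u2 = "rewrite_step z y r"
  let ?c3 = "remask_only (map (\<lambda>xi. xi = Mask) ?u2)"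
  have lengths: "length ?u1 = length z" "length ?u2 = length z"
    using assms by (simp_all add: rewrite_step_def)
  have step1: "apmdm_step z y ?c1 = ?u1"
    using apmdm_step_mask_rewritten[OF assms] .
  have step2: "apmdm_step ?u1 y ?c2 = ?u2"
    using apmdm_step_fill_rewritten[OF assms] .
  have step3: "apmdm_step ?u2 y ?c3 = ?u2"
    using assms lengths by (simp add: apmdm_step_remask_masks)
  show ?thesis
    by (rule exI[of _ y], rule exI[of _ ?c1], rule exI[of _ ?u1],
        rule exI[of _ y], rule exI[of _ ?c2], rule exI[of _ ?u2],
        rule exI[of _ y], rule exI[of _ ?c3])
       (use assms lengths step1 step2 step3 in \<open>simp add: remask_only_def\<close>)
qed

end
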